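(* Let $T_2\in\mathbb{R}^{M^2\times M^2}$ be the symmetric positive definite 2-level Toeplitz matrix $T_2=I\otimes T_1+T_1\otimes I$ described in the context, and let $D_2\in\mathbb{R}^{M^2\times M^2}$ be a diagonal matrix with nonnegative diagonal entries, whose maximal diagonal entry is $\lambda_{\max}$. Let $$\mathcal{R}_2=\begin{bmatrix} I & T_2-D_2\\ D_2-T_2 & I\end{bmatrix},\quad \mathcal{T}_2=\begin{bmatrix} 0 & T_2\\ -T_2 & 0\end{bmatrix},\quad \mathcal{D}_2=\begin{bmatrix} I & -D_2\\ D_2 & I\end{bmatrix},$$ let $\omega>0$, and let $\mathcal{F}_{2,\omega}=\frac{1}{2\omega}(\omega I+\mathcal{T}_2)(\omega I+\mathcal{D}_2)$. Then all eigenvalues of $\mathcal{F}_{2,\omega}^{-1}\mathcal{R}_2$ lie in the disk centered at $1$ with radius $$\sigma(\omega)=\sqrt{\frac{(\omega-1)^2+\lambda_{\max}^2}{(\omega+1)^2+\lambda_{\max}^2}}<1.$$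
   Context: Let $1<\alpha\le2$, $M$ a positive integer, $\mathrm{a}<\mathrm{b}$, $h=(\mathrm{b}-\mathrm{a})/(M+1)$, $\Delta t>0$, $\mu=\Delta t/h^{\alpha}$. For $k\in\mathbb{Z}$ let $c_k=\frac{(-1)^k\Gamma(\alpha+1)}{\Gamma(\alpha/2-k+1)\Gamma(\alpha/2+k+1)}$. Let $T_1=\mu T_0\in\mathbb{R}^{M\times M}$ where $T_0$ is the symmetric Toeplitz matrix with entries $[T_0]_{i,j}=c_{i-j}$. $I$ denotes identity matrices of appropriate size, $\otimes$ the Kronecker product. *)

theory Defs
  imports "HOL-Analysis.Analysis" "Jordan_Normal_Form.Gauss_Jordan_Elimination" "Jordan_Normal_Form.Char_Poly"
begin

text \<open>Fractional centered difference coefficients c_k (Gamma at a pole is 0 in Isabelle,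
  matching the convention 1/Gamma(pole) = 0).\<close>
definition frac_coeff :: "real \<Rightarrow> int \<Rightarrow> real" where
  "frac_coeff \<alpha> k = (-1) powi k * Gamma (\<alpha> + 1) /
     (Gamma (\<alpha>/2 - of_int k + 1) * Gamma (\<alpha>/2 + of_int k + 1))"

definition T0 :: "real \<Rightarrow> nat \<Rightarrow> real mat" where
  "T0 \<alpha> M = mat M M (\<lambda>(i,j). frac_coeff \<alpha> (int i - int j))"

definition T1 :: "real \<Rightarrow> nat \<Rightarrow> real \<Rightarrow> real \<Rightarrow> real \<Rightarrow> real mat" where
  "T1 \<alpha> M a b dt = (dt / (((b - a) / (real M + 1)) powr \<alpha>)) \<cdot>\<^sub>m T0 \<alpha> M"

definition kron :: "'a :: times mat \<Rightarrow> 'a mat \<Rightarrow> 'a mat" where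
  "kron A B = mat (dim_row A * dim_row B) (dim_col A * dim_col B)
     (\<lambda>(i,j). A $$ (i div dim_row B, j div dim_col B) * B $$ (i mod dim_row B, j mod dim_col B))"

definition T2 :: "real \<Rightarrow> nat \<Rightarrow> real \<Rightarrow> real \<Rightarrow> real \<Rightarrow> real mat" where
  "T2 \<alpha> M a b dt = kron (1\<^sub>m M) (T1 \<alpha> M a b dt) + kron (T1 \<alpha> M a b dt) (1\<^sub>m M)"

definition calR :: "real mat \<Rightarrow> real mat \<Rightarrow> real mat" where
  "calR T D = four_block_mat (1\<^sub>m (dim_row T)) (T - D) (D - T) (1\<^sub>m (dim_row T))"

definition calT :: "real mat \<Rightarrow> real mat" where
  "calT T = four_block_mat (0\<^sub>m (dim_row T) (dim_row T)) T (- T) (0\<^sub>m (dim_row T) (dim_row T))"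

definition calD :: "real mat \<Rightarrow> real mat" where
  "calD D = four_block_mat (1\<^sub>m (dim_row D)) (- D) D (1\<^sub>m (dim_row D))"

definition calF :: "real \<Rightarrow> real mat \<Rightarrow> real mat \<Rightarrow> real mat" where
  "calF \<omega> T D = (1 / (2 * \<omega>)) \<cdot>\<^sub>m
     ((\<omega> \<cdot>\<^sub>m 1\<^sub>m (2 * dim_row T) + calT T) * (\<omega> \<cdot>\<^sub>m 1\<^sub>m (2 * dim_row T) + calD D))"

end

theory Submission
  imports Defs
begin

text \<open>
  Write \<open>\<D>\<^sub>2 = I + S\<close> with \<open>S = [0, -D\<^sub>2; D\<^sub>2, 0]\<close>. Then \<open>K = \<T>\<^sub>2\<close> and \<open>S\<close> are
  real skew-symmetric, \<open>\<R>\<^sub>2 = I + K + S\<close> and \<open>2\<omega>\<F> = (\<omega>I + K)((\<omega> + 1)I + S)\<close>.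
  If \<open>\<R>\<^sub>2 v = z\<F>v\<close> with \<open>v \<noteq> 0\<close>, put \<open>\<mu> = 1 - z\<close>, \<open>x = ((\<omega> + 1)I + S)v\<close> and
  \<open>u = ((\<omega> - 1)I - S)v\<close>. Then \<open>\<omega>(u - \<mu>x) = K(u + \<mu>x)\<close>, and as \<open>Re \<langle>Kw, w\<rangle> = 0\<close> for
  skew \<open>K\<close>, this forces \<open>\<parallel>u\<parallel> = |\<mu>| \<parallel>x\<parallel>\<close>. Skew-symmetry of \<open>S\<close> gives
  \<open>\<parallel>u\<parallel>\<^sup>2 = (\<omega> - 1)\<^sup>2\<parallel>v\<parallel>\<^sup>2 + \<parallel>Sv\<parallel>\<^sup>2\<close> and \<open>\<parallel>x\<parallel>\<^sup>2 = (\<omega> + 1)\<^sup>2\<parallel>v\<parallel>\<^sup>2 + \<parallel>Sv\<parallel>\<^sup>2\<close>;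
  since \<open>\<parallel>Sv\<parallel> \<le> \<lambda>\<^sub>m\<^sub>a\<^sub>x\<parallel>v\<parallel>\<close> and the quotient \<open>\<parallel>u\<parallel>\<^sup>2 / \<parallel>x\<parallel>\<^sup>2\<close> increases with
  \<open>\<parallel>Sv\<parallel>\<^sup>2\<close>, we get \<open>|\<mu>|\<^sup>2 \<le> \<sigma>(\<omega>)\<^sup>2\<close>. The same norm identities show that \<open>\<F>\<close> is
  injective, hence invertible.
\<close>

lemma index_transpose_eq:
  assumes "transpose_mat A = B" "A \<in> carrier_mat n n" "i < n" "j < n"
  shows "A $$ (j, i) = B $$ (i, j)"
  using arg_cong[OF assms(1), of "\<lambda>C. C $$ (i, j)"] assms(2-4) by simp

lemma transpose_diagonal_mat:
  assumes "D \<in> carrier_mat n n" "diagonal_mat D"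
  shows "transpose_mat D = D"
proof -
  have "D $$ (j, i) = D $$ (i, j)" if "i < n" "j < n" for i j
    using assms that unfolding diagonal_mat_def by (cases "i = j") auto
  then show ?thesis
    using assms(1) by (intro eq_matI) auto
qed

lemma transpose_kron: "transpose_mat (kron A B) = kron (transpose_mat A) (transpose_mat B)"
proof (rule eq_matI)
  fix i j assume "i < dim_row (kron (transpose_mat A) (transpose_mat B))"
    and "j < dim_col (kron (transpose_mat A) (transpose_mat B))"
  then have "i < dim_col A * dim_col B" "j < dim_row A * dim_row B"
    by (simp_all add: kron_def)
  moreover from this have "0 < dim_col B" "0 < dim_row B" by (auto intro: gr0I)
  ultimately show "transpose_mat (kron A B) $$ (i, j) = kron (transpose_mat A) (transpose_mat B) $$ (i, j)"
    by (simp add: kron_def less_mult_imp_div_less)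
qed (simp_all add: kron_def)

lemma kron_carrier_mat: "A \<in> carrier_mat m n \<Longrightarrow> B \<in> carrier_mat p q \<Longrightarrow> kron A B \<in> carrier_mat (m * p) (n * q)"
  by (simp add: kron_def)

lemma smult_mat_mult_vec:
  "A \<in> carrier_mat nr nc \<Longrightarrow> v \<in> carrier_vec nc \<Longrightarrow> (k \<cdot>\<^sub>m A) *\<^sub>v v = k \<cdot>\<^sub>v (A *\<^sub>v v)"
  by (intro eq_vecI) (auto simp: scalar_prod_def sum_distrib_left mult.assoc)

lemma smult_one_add_mult_vec:
  fixes A :: "'a :: comm_ring_1 mat"
  assumes "A \<in> carrier_mat n n" "v \<in> carrier_vec n"
  shows "(k \<cdot>\<^sub>m 1\<^sub>m n + A) *\<^sub>v v = k \<cdot>\<^sub>v v + A *\<^sub>v v"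
  using assms by (simp add: add_mult_distrib_mat_vec[of _ n n] smult_mat_mult_vec[of _ n n])

lemma mult_mat_vec_lincomb:
  fixes A :: "'a :: field mat"
  assumes "A \<in> carrier_mat nr nc" "v \<in> carrier_vec nc" "w \<in> carrier_vec nc"
  shows "A *\<^sub>v (a \<cdot>\<^sub>v v + b \<cdot>\<^sub>v w) = a \<cdot>\<^sub>v (A *\<^sub>v v) + b \<cdot>\<^sub>v (A *\<^sub>v w)"
  using assms by (simp add: mult_add_distrib_mat_vec[of _ nr nc] mult_mat_vec)

lemma eigenvalue_mult_right_inverse:
  fixes A A' B :: "'a :: field mat"
  assumes A: "A \<in> carrier_mat n n" and A': "A' \<in> carrier_mat n n" and B: "B \<in> carrier_mat n n"
    and inv: "A * A' = 1\<^sub>m n" and ev: "eigenvalue (A' * B) z"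
  obtains v where "v \<in> carrier_vec n" "v \<noteq> 0\<^sub>v n" "B *\<^sub>v v = z \<cdot>\<^sub>v (A *\<^sub>v v)"
proof -
  obtain v where v: "v \<in> carrier_vec n" "v \<noteq> 0\<^sub>v n" and Av: "(A' * B) *\<^sub>v v = z \<cdot>\<^sub>v v"
    using ev A' unfolding eigenvalue_def eigenvector_def by auto
  have "B *\<^sub>v v = (A * A') *\<^sub>v (B *\<^sub>v v)" using inv B v by simp
  also have "\<dots> = A *\<^sub>v ((A' * B) *\<^sub>v v)" using A A' B v by simp
  also have "\<dots> = z \<cdot>\<^sub>v (A *\<^sub>v v)" unfolding Av using A v by (simp add: mult_mat_vec)
  finally show ?thesis using that v by blast
qed

lemma frac_coeff_uminus: "frac_coeff \<alpha> (- k) = frac_coeff \<alpha> k"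
  unfolding frac_coeff_def by (simp add: power_int_minus_one_minus mult.commute)

lemma transpose_T1: "transpose_mat (T1 \<alpha> M a b dt) = T1 \<alpha> M a b dt"
  unfolding T1_def T0_def using frac_coeff_uminus[of \<alpha> "int _ - int _"] by (intro eq_matI) auto

lemma T1_carrier: "T1 \<alpha> M a b dt \<in> carrier_mat M M"
  by (simp add: T1_def T0_def)

lemma T2_carrier: "T2 \<alpha> M a b dt \<in> carrier_mat (M^2) (M^2)"
  by (simp add: T2_def T1_def T0_def kron_def power2_eq_square)

lemma transpose_T2: "transpose_mat (T2 \<alpha> M a b dt) = T2 \<alpha> M a b dt"
  unfolding T2_def
  by (subst transpose_add[of _ "M * M" "M * M"])
    (auto intro: kron_carrier_mat T1_carrier simp: transpose_kron transpose_T1)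

lemma weighted_ratio_le:
  fixes a b N Q L :: real
  assumes "0 \<le> a" "a \<le> b" "0 < b" "0 < N" "0 \<le> Q" "Q \<le> L * N"
  shows "(a * N + Q) / (b * N + Q) \<le> (a + L) / (b + L)"
proof -
  have "0 \<le> L" using assms by (meson dual_order.trans zero_le_mult_iff not_less)
  have "(b - a) * Q \<le> (b - a) * (L * N)"
    using assms by (intro mult_left_mono) auto
  then have "(a * N + Q) * (b + L) \<le> (a + L) * (b * N + Q)"
    by (simp add: algebra_simps)
  then show ?thesis
    using assms \<open>0 \<le> L\<close> by (simp add: divide_simps add_pos_nonneg)
qed

abbreviation cmat :: "real mat \<Rightarrow> complex mat" where
  "cmat \<equiv> map_mat complex_of_real"

lemma cmat_smult: "cmat (c \<cdot>\<^sub>m A) = of_real c \<cdot>\<^sub>m cmat A"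
  by (intro eq_matI) auto

lemma cmat_smult_one_add:
  "A \<in> carrier_mat n n \<Longrightarrow> cmat (c \<cdot>\<^sub>m 1\<^sub>m n + A) = of_real c \<cdot>\<^sub>m 1\<^sub>m n + cmat A"
  by (intro eq_matI) auto

lemma cmat_one_add_add:
  "K \<in> carrier_mat n n \<Longrightarrow> S \<in> carrier_mat n n \<Longrightarrow> cmat (1\<^sub>m n + K + S) = 1\<^sub>m n + cmat K + cmat S"
  by (intro eq_matI) auto

lemma mat_inverse_of_cmat_injective:
  fixes A :: "real mat"
  assumes A: "A \<in> carrier_mat n n"
    and inj: "\<And>v. v \<in> carrier_vec n \<Longrightarrow> cmat A *\<^sub>v v = 0\<^sub>v n \<Longrightarrow> v = 0\<^sub>v n"
  obtains A' where "mat_inverse A = Some A'" "A * A' = 1\<^sub>m n" "A' \<in> carrier_mat n n"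
proof -
  have "det (cmat A) \<noteq> 0"
    using inj det_0_iff_vec_prod_zero[of "cmat A" n] A by auto
  then have "A \<in> Units (ring_mat TYPE(real) n ())"
    using det_non_zero_imp_unit[OF A] by simp
  then obtain A' where "mat_inverse A = Some A'"
    using mat_inverse(1)[OF A] by fastforce
  then show ?thesis
    using that mat_inverse(2)[OF A] by blast
qed

definition sqnorm :: "complex vec \<Rightarrow> real" where
  "sqnorm v = (\<Sum>i<dim_vec v. (cmod (v $ i))\<^sup>2)"

lemma sqnorm_nonneg: "0 \<le> sqnorm v"
  unfolding sqnorm_def by (simp add: sum_nonneg)

lemma sqnorm_eq_0_iff: "sqnorm v = 0 \<longleftrightarrow> v = 0\<^sub>v (dim_vec v)"
  unfolding sqnorm_def by (auto simp: sum_nonneg_eq_0_iff vec_eq_iff)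

lemma sqnorm_smult: "sqnorm (c \<cdot>\<^sub>v v) = (cmod c)\<^sup>2 * sqnorm v"
  unfolding sqnorm_def by (simp add: sum_distrib_left norm_mult power_mult_distrib)

lemma sqnorm_uminus: "sqnorm (- v) = sqnorm v"
  unfolding sqnorm_def by simp

lemma sqnorm_append: "sqnorm (v @\<^sub>v w) = sqnorm v + sqnorm w"
proof -
  let ?f = "\<lambda>i. (cmod ((v @\<^sub>v w) $ i))\<^sup>2" and ?m = "dim_vec v" and ?n = "dim_vec w"
  have "sqnorm (v @\<^sub>v w) = sum ?f {0..<?m} + sum ?f {?m..<?m + ?n}"
    unfolding sqnorm_def lessThan_atLeast0 index_append_vec(2)
    by (rule sum.atLeastLessThan_concat[symmetric]) simp_all
  also have "sum ?f {?m..<?m + ?n} = sum (\<lambda>i. ?f (i + ?m)) {0..<?n}"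
    using sum.shift_bounds_nat_ivl[of ?f 0 ?m ?n] by (simp only: add_0 add.commute)
  finally show ?thesis
    unfolding sqnorm_def lessThan_atLeast0 by simp
qed

lemma Re_cscalar_prod:
  "x \<in> carrier_vec n \<Longrightarrow> y \<in> carrier_vec n \<Longrightarrow> Re (x \<bullet>c y) = (\<Sum>i<n. Re (x $ i * cnj (y $ i)))"
  by (simp add: scalar_prod_def Re_sum atLeast0LessThan)

lemma Re_cscalar_prod_commute:
  "x \<in> carrier_vec n \<Longrightarrow> y \<in> carrier_vec n \<Longrightarrow> Re (x \<bullet>c y) = Re (y \<bullet>c x)"
  by (simp add: Re_cscalar_prod mult.commute)

lemma sqnorm_add: assumes "x \<in> carrier_vec n" "y \<in> carrier_vec n"
  shows "sqnorm (x + y) = sqnorm x + sqnorm y + 2 * Re (x \<bullet>c y)"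
proof -
  have "(cmod (a + b))\<^sup>2 = (cmod a)\<^sup>2 + (cmod b)\<^sup>2 + 2 * Re (a * cnj b)" for a b
    unfolding cmod_power2 by (simp add: power2_eq_square algebra_simps)
  then show ?thesis
    using assms by (simp add: sqnorm_def Re_cscalar_prod sum.distrib sum_distrib_left)
qed

lemma Re_cscalar_prod_diff_add: assumes "x \<in> carrier_vec n" "y \<in> carrier_vec n"
  shows "Re ((x - y) \<bullet>c (x + y)) = sqnorm x - sqnorm y"
proof -
  have "Re ((x - y) \<bullet>c (x + y)) = (\<Sum>i<n. Re ((x $ i - y $ i) * cnj (x $ i + y $ i)))"
    using assms by (simp add: Re_cscalar_prod[of _ n])
  also have "\<dots> = (\<Sum>i<n. (cmod (x $ i))\<^sup>2 - (cmod (y $ i))\<^sup>2)"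
    unfolding cmod_power2 by (simp add: power2_eq_square algebra_simps)
  finally show ?thesis
    using assms by (simp add: sqnorm_def sum_subtractf)
qed

lemma sqnorm_diagonal_le:
  fixes D :: "real mat"
  assumes D: "D \<in> carrier_mat m m" and "diagonal_mat D" and bound: "\<And>i. i < m \<Longrightarrow> \<bar>D $$ (i, i)\<bar> \<le> l"
    and v: "v \<in> carrier_vec m"
  shows "sqnorm (cmat D *\<^sub>v v) \<le> l\<^sup>2 * sqnorm v"
proof -
  have Dv: "(cmat D *\<^sub>v v) $ i = of_real (D $$ (i, i)) * v $ i" if i: "i < m" for i
  proof -
    have "(cmat D *\<^sub>v v) $ i = (\<Sum>j\<in>{0..<m}. of_real (D $$ (i, j)) * v $ j)"
      using D v i by (simp add: scalar_prod_def)
    also have "\<dots> = (\<Sum>j\<in>{0..<m}. if j = i then of_real (D $$ (i, i)) * v $ i else 0)"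
      using D i \<open>diagonal_mat D\<close> unfolding diagonal_mat_def by (intro sum.cong) auto
    finally show ?thesis using i by simp
  qed
  have "sqnorm (cmat D *\<^sub>v v) = (\<Sum>i<m. (cmod ((cmat D *\<^sub>v v) $ i))\<^sup>2)"
    unfolding sqnorm_def using D by simp
  also have "\<dots> = (\<Sum>i<m. \<bar>D $$ (i, i)\<bar>\<^sup>2 * (cmod (v $ i))\<^sup>2)"
    by (intro sum.cong refl) (simp del: index_mult_mat_vec add: Dv norm_mult power_mult_distrib)
  also have "\<dots> \<le> (\<Sum>i<m. l\<^sup>2 * (cmod (v $ i))\<^sup>2)"
    by (intro sum_mono mult_right_mono power_mono) (auto simp: bound)
  also have "\<dots> = l\<^sup>2 * sqnorm v"
    unfolding sqnorm_def using v by (simp add: sum_distrib_left)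
  finally show ?thesis .
qed

lemma Re_cscalar_prod_skew:
  fixes K :: "real mat"
  assumes K: "K \<in> carrier_mat n n" and skew: "transpose_mat K = - K" and w: "w \<in> carrier_vec n"
  shows "Re ((cmat K *\<^sub>v w) \<bullet>c w) = 0"
proof -
  have entry: "K $$ (i, j) = - K $$ (j, i)" if "i < n" "j < n" for i j
    using index_transpose_eq[OF skew K that(2,1)] K that by simp
  define s where "s = (cmat K *\<^sub>v w) \<bullet>c w"
  have s: "s = (\<Sum>i<n. \<Sum>j<n. K $$ (i, j) * w $ j * cnj (w $ i))"
    unfolding s_def using K w
    by (simp add: scalar_prod_def row_def sum_distrib_right atLeast0LessThan)
  have "cnj s = (\<Sum>i<n. \<Sum>j<n. K $$ (i, j) * cnj (w $ j) * w $ i)"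
    unfolding s by (simp add: cnj_sum)
  also have "\<dots> = (\<Sum>i<n. \<Sum>j<n. - (K $$ (j, i) * w $ i * cnj (w $ j)))"
    by (intro sum.cong refl) (subst entry; auto)
  also have "\<dots> = - s"
    unfolding s by (subst sum.swap) (simp add: sum_negf)
  finally have "cnj s = - s" .
  then have "Re (cnj s) = Re (- s)"
    by (rule arg_cong)
  then show ?thesis
    unfolding s_def[symmetric] by simp
qed

lemma sqnorm_add_skew:
  fixes K :: "real mat" and a b :: real
  assumes K: "K \<in> carrier_mat n n" and skew: "transpose_mat K = - K" and w: "w \<in> carrier_vec n"
  shows "sqnorm (of_real a \<cdot>\<^sub>v w + of_real b \<cdot>\<^sub>v (cmat K *\<^sub>v w))
    = a\<^sup>2 * sqnorm w + b\<^sup>2 * sqnorm (cmat K *\<^sub>v w)"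
proof -
  let ?y = "cmat K *\<^sub>v w"
  have y: "?y \<in> carrier_vec n" using K w by simp
  have "sqnorm (of_real a \<cdot>\<^sub>v w + of_real b \<cdot>\<^sub>v ?y) = a\<^sup>2 * sqnorm w + b\<^sup>2 * sqnorm ?y
      + 2 * Re ((of_real a \<cdot>\<^sub>v w) \<bullet>c (of_real b \<cdot>\<^sub>v ?y))"
    using w y by (simp add: sqnorm_add[of _ n] sqnorm_smult)
  also have "Re ((of_real a \<cdot>\<^sub>v w) \<bullet>c (of_real b \<cdot>\<^sub>v ?y)) = a * b * Re (w \<bullet>c ?y)"
    using w y by (simp add: conjugate_smult_vec)
  also have "Re (w \<bullet>c ?y) = 0"
    using Re_cscalar_prod_skew[OF K skew w] Re_cscalar_prod_commute[OF w y] by simp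
  finally show ?thesis by (simp only: mult_zero_right add_0_right)
qed

lemma sqnorm_cayley_skew:
  fixes K :: "real mat" and \<omega> :: real
  assumes K: "K \<in> carrier_mat n n" and skew: "transpose_mat K = - K"
    and u: "u \<in> carrier_vec n" and x: "x \<in> carrier_vec n" and "\<omega> \<noteq> 0"
    and eq: "of_real \<omega> \<cdot>\<^sub>v (u - \<mu> \<cdot>\<^sub>v x) = cmat K *\<^sub>v (u + \<mu> \<cdot>\<^sub>v x)"
  shows "sqnorm u = (cmod \<mu>)\<^sup>2 * sqnorm x"
proof -
  have \<mu>x: "\<mu> \<cdot>\<^sub>v x \<in> carrier_vec n" using x by simp
  have "0 = Re ((cmat K *\<^sub>v (u + \<mu> \<cdot>\<^sub>v x)) \<bullet>c (u + \<mu> \<cdot>\<^sub>v x))"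
    using Re_cscalar_prod_skew[OF K skew] u \<mu>x by simp
  also have "\<dots> = \<omega> * Re ((u - \<mu> \<cdot>\<^sub>v x) \<bullet>c (u + \<mu> \<cdot>\<^sub>v x))"
    unfolding eq[symmetric] using u \<mu>x by simp
  also have "\<dots> = \<omega> * (sqnorm u - (cmod \<mu>)\<^sup>2 * sqnorm x)"
    using Re_cscalar_prod_diff_add[OF u \<mu>x] by (simp add: sqnorm_smult)
  finally show ?thesis using \<open>\<omega> \<noteq> 0\<close> by simp
qed

definition hss_preconditioner :: "real \<Rightarrow> real mat \<Rightarrow> real mat \<Rightarrow> real mat" where
  "hss_preconditioner \<omega> K S = (1 / (2 * \<omega>)) \<cdot>\<^sub>m
     ((\<omega> \<cdot>\<^sub>m 1\<^sub>m (dim_row K) + K) * ((\<omega> + 1) \<cdot>\<^sub>m 1\<^sub>m (dim_row K) + S))"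

lemma hss_preconditioner_carrier:
  "K \<in> carrier_mat n n \<Longrightarrow> S \<in> carrier_mat n n \<Longrightarrow> hss_preconditioner \<omega> K S \<in> carrier_mat n n"
  unfolding hss_preconditioner_def by (auto intro!: mult_carrier_mat)

lemma hss_preconditioner_mult_vec:
  assumes K: "K \<in> carrier_mat n n" and S: "S \<in> carrier_mat n n" and v: "v \<in> carrier_vec n"
    and "\<omega> \<noteq> 0"
  defines "x \<equiv> of_real (\<omega> + 1) \<cdot>\<^sub>v v + cmat S *\<^sub>v v"
  shows "of_real (2 * \<omega>) \<cdot>\<^sub>v (cmat (hss_preconditioner \<omega> K S) *\<^sub>v v) = of_real \<omega> \<cdot>\<^sub>v x + cmat K *\<^sub>v x"
proof -
  let ?P = "of_real \<omega> \<cdot>\<^sub>m 1\<^sub>m n + cmat K" and ?Q = "of_real (\<omega> + 1) \<cdot>\<^sub>m 1\<^sub>m n + cmat S"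
  have P: "?P \<in> carrier_mat n n" and Q: "?Q \<in> carrier_mat n n" using K S by auto
  have "cmat (hss_preconditioner \<omega> K S) = of_real (1 / (2 * \<omega>)) \<cdot>\<^sub>m (?P * ?Q)"
    unfolding hss_preconditioner_def cmat_smult using K S
    by (subst of_real_hom.mat_hom_mult[of _ n n _ n]) (auto simp: cmat_smult_one_add)
  then have "cmat (hss_preconditioner \<omega> K S) *\<^sub>v v = of_real (1 / (2 * \<omega>)) \<cdot>\<^sub>v (?P *\<^sub>v (?Q *\<^sub>v v))"
    using P Q v by (simp add: smult_mat_mult_vec[of _ n n])
  also have "?Q *\<^sub>v v = x"
    unfolding x_def using S v by (intro smult_one_add_mult_vec) auto
  also have "?P *\<^sub>v x = of_real \<omega> \<cdot>\<^sub>v x + cmat K *\<^sub>v x"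
    using K S v unfolding x_def by (intro smult_one_add_mult_vec) auto
  finally show ?thesis using \<open>\<omega> \<noteq> 0\<close> by (simp add: smult_smult_assoc)
qed

lemma hss_preconditioner_injective:
  fixes K S :: "real mat"
  assumes K: "K \<in> carrier_mat n n" and skew_K: "transpose_mat K = - K"
    and S: "S \<in> carrier_mat n n" and skew_S: "transpose_mat S = - S"
    and "0 < \<omega>" and v: "v \<in> carrier_vec n"
    and Fv: "cmat (hss_preconditioner \<omega> K S) *\<^sub>v v = 0\<^sub>v n"
  shows "v = 0\<^sub>v n"
proof -
  define x where "x = of_real (\<omega> + 1) \<cdot>\<^sub>v v + of_real 1 \<cdot>\<^sub>v (cmat S *\<^sub>v v)"
  have x: "x \<in> carrier_vec n" unfolding x_def using S v by simp
  have "of_real \<omega> \<cdot>\<^sub>v x + of_real 1 \<cdot>\<^sub>v (cmat K *\<^sub>v x)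
      = of_real (2 * \<omega>) \<cdot>\<^sub>v (cmat (hss_preconditioner \<omega> K S) *\<^sub>v v)"
    using hss_preconditioner_mult_vec[OF K S v, of \<omega>] \<open>0 < \<omega>\<close> unfolding x_def by simp
  also have "\<dots> = 0\<^sub>v n"
    unfolding Fv by (intro eq_vecI) auto
  finally have "\<omega>\<^sup>2 * sqnorm x + sqnorm (cmat K *\<^sub>v x) = 0"
    using sqnorm_add_skew[OF K skew_K x, of \<omega> 1] sqnorm_eq_0_iff[of "0\<^sub>v n"] by simp
  then have "sqnorm x = 0"
    using \<open>0 < \<omega>\<close> sqnorm_nonneg[of x] sqnorm_nonneg[of "cmat K *\<^sub>v x"]
    by (simp add: add_nonneg_eq_0_iff)
  then have "(\<omega> + 1)\<^sup>2 * sqnorm v + sqnorm (cmat S *\<^sub>v v) = 0"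
    using sqnorm_add_skew[OF S skew_S v, of "\<omega> + 1" 1] unfolding x_def by simp
  then have "sqnorm v = 0"
    using \<open>0 < \<omega>\<close> sqnorm_nonneg[of v] sqnorm_nonneg[of "cmat S *\<^sub>v v"]
    by (simp add: add_nonneg_eq_0_iff)
  then show ?thesis
    using v by (simp add: sqnorm_eq_0_iff)
qed

text \<open>The identity \<open>2\<omega>(F - R) = (\<omega>I - K)((\<omega> - 1)I - S)\<close> turns \<open>R v = z F v\<close> into
  the following relation for \<open>\<mu> = 1 - z\<close>.\<close>

lemma hss_eigenvector_cayley_form:
  fixes K S :: "real mat" and \<omega> :: real
  assumes K: "K \<in> carrier_mat n n" and S: "S \<in> carrier_mat n n"
    and v: "v \<in> carrier_vec n" and "\<omega> \<noteq> 0"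
    and eig: "cmat (1\<^sub>m n + K + S) *\<^sub>v v = z \<cdot>\<^sub>v (cmat (hss_preconditioner \<omega> K S) *\<^sub>v v)"
  defines "p \<equiv> cmat S *\<^sub>v v"
  defines "x \<equiv> of_real (\<omega> + 1) \<cdot>\<^sub>v v + of_real 1 \<cdot>\<^sub>v p"
    and "u \<equiv> of_real (\<omega> - 1) \<cdot>\<^sub>v v + of_real (- 1) \<cdot>\<^sub>v p"
  shows "of_real \<omega> \<cdot>\<^sub>v (u - (1 - z) \<cdot>\<^sub>v x) = cmat K *\<^sub>v (u + (1 - z) \<cdot>\<^sub>v x)"
proof (rule eq_vecI)
  fix i assume "i < dim_vec (cmat K *\<^sub>v (u + (1 - z) \<cdot>\<^sub>v x))"
  then have i: "i < n" using K by simp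
  have p: "p \<in> carrier_vec n" and u: "u \<in> carrier_vec n" and x: "x \<in> carrier_vec n"
    unfolding p_def u_def x_def using S v by auto
  have F: "hss_preconditioner \<omega> K S \<in> carrier_mat n n"
    using K S by (rule hss_preconditioner_carrier)
  let ?Fv = "cmat (hss_preconditioner \<omega> K S) *\<^sub>v v"
  have "v $ i + (cmat K *\<^sub>v v) $ i + p $ i = z * ?Fv $ i"
    using arg_cong[OF eig, of "\<lambda>w. w $ i"] K S F v i unfolding p_def
    by (simp add: cmat_one_add_add[OF K S] add_mult_distrib_mat_vec[of _ n n] add.assoc)
  moreover have "2 * of_real \<omega> * ?Fv $ i = of_real \<omega> * x $ i + (cmat K *\<^sub>v x) $ i"
    using arg_cong[OF hss_preconditioner_mult_vec[OF K S v \<open>\<omega> \<noteq> 0\<close>], of "\<lambda>w. w $ i"] F K S v i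
    unfolding p_def x_def by simp
  ultimately have eig_i: "z * (of_real \<omega> * x $ i + (cmat K *\<^sub>v x) $ i)
      = 2 * of_real \<omega> * (v $ i + (cmat K *\<^sub>v v) $ i + p $ i)"
    by (metis mult.left_commute)
  have "u + (1 - z) \<cdot>\<^sub>v x = (of_real (\<omega> - 1) + (1 - z) * of_real (\<omega> + 1)) \<cdot>\<^sub>v v + (- z) \<cdot>\<^sub>v p"
    unfolding u_def x_def using v p by (intro eq_vecI) (auto simp: algebra_simps)
  then have "cmat K *\<^sub>v (u + (1 - z) \<cdot>\<^sub>v x)
      = (of_real (\<omega> - 1) + (1 - z) * of_real (\<omega> + 1)) \<cdot>\<^sub>v (cmat K *\<^sub>v v) + (- z) \<cdot>\<^sub>v (cmat K *\<^sub>v p)"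
    using K v p by (simp add: mult_mat_vec_lincomb[of _ n n])
  moreover have "cmat K *\<^sub>v x = of_real (\<omega> + 1) \<cdot>\<^sub>v (cmat K *\<^sub>v v) + of_real 1 \<cdot>\<^sub>v (cmat K *\<^sub>v p)"
    unfolding x_def using K v p by (intro mult_mat_vec_lincomb) auto
  ultimately have "(of_real \<omega> \<cdot>\<^sub>v (u - (1 - z) \<cdot>\<^sub>v x)) $ i - (cmat K *\<^sub>v (u + (1 - z) \<cdot>\<^sub>v x)) $ i
      = z * (of_real \<omega> * x $ i + (cmat K *\<^sub>v x) $ i)
        - 2 * of_real \<omega> * (v $ i + (cmat K *\<^sub>v v) $ i + p $ i)"
    using i K v p u x by (simp add: u_def x_def algebra_simps)
  then show "(of_real \<omega> \<cdot>\<^sub>v (u - (1 - z) \<cdot>\<^sub>v x)) $ i = (cmat K *\<^sub>v (u + (1 - z) \<cdot>\<^sub>v x)) $ i"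
    unfolding eig_i by simp
qed (use K S v in \<open>simp add: u_def x_def p_def\<close>)

lemma hss_generalized_eigenvalue_bound:
  fixes K S :: "real mat" and lmax \<omega> :: real
  assumes K: "K \<in> carrier_mat n n" and skew_K: "transpose_mat K = - K"
    and S: "S \<in> carrier_mat n n" and skew_S: "transpose_mat S = - S"
    and "0 < \<omega>" and v: "v \<in> carrier_vec n" and "v \<noteq> 0\<^sub>v n"
    and S_bound: "sqnorm (cmat S *\<^sub>v v) \<le> lmax\<^sup>2 * sqnorm v"
    and eig: "cmat (1\<^sub>m n + K + S) *\<^sub>v v = z \<cdot>\<^sub>v (cmat (hss_preconditioner \<omega> K S) *\<^sub>v v)"
  shows "(cmod (z - 1))\<^sup>2 \<le> ((\<omega> - 1)\<^sup>2 + lmax\<^sup>2) / ((\<omega> + 1)\<^sup>2 + lmax\<^sup>2)"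
proof -
  define p where "p = cmat S *\<^sub>v v"
  define x where "x = of_real (\<omega> + 1) \<cdot>\<^sub>v v + of_real 1 \<cdot>\<^sub>v p"
  define u where "u = of_real (\<omega> - 1) \<cdot>\<^sub>v v + of_real (- 1) \<cdot>\<^sub>v p"
  define N where "N = sqnorm v"
  define Q where "Q = sqnorm p"
  have u: "u \<in> carrier_vec n" and x: "x \<in> carrier_vec n"
    unfolding u_def x_def p_def using S v by auto
  have "0 < N"
    unfolding N_def using \<open>v \<noteq> 0\<^sub>v n\<close> v sqnorm_nonneg[of v] sqnorm_eq_0_iff[of v] by force
  have "0 \<le> Q"
    unfolding Q_def by (rule sqnorm_nonneg)
  have "\<omega> \<noteq> 0" using \<open>0 < \<omega>\<close> by simp
  have "sqnorm u = (cmod (1 - z))\<^sup>2 * sqnorm x"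
    using sqnorm_cayley_skew[OF K skew_K u x \<open>\<omega> \<noteq> 0\<close>]
      hss_eigenvector_cayley_form[OF K S v \<open>\<omega> \<noteq> 0\<close> eig]
    unfolding u_def x_def p_def by blast
  moreover have "sqnorm u = (\<omega> - 1)\<^sup>2 * N + Q"
    unfolding u_def N_def Q_def p_def using sqnorm_add_skew[OF S skew_S v, of "\<omega> - 1" "- 1"] by simp
  moreover have "sqnorm x = (\<omega> + 1)\<^sup>2 * N + Q"
    unfolding x_def N_def Q_def p_def using sqnorm_add_skew[OF S skew_S v, of "\<omega> + 1" 1] by simp
  moreover have "0 < (\<omega> + 1)\<^sup>2 * N + Q"
    using \<open>0 < N\<close> \<open>0 \<le> Q\<close> \<open>0 < \<omega>\<close> by (simp add: add_pos_nonneg)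
  ultimately have "(cmod (z - 1))\<^sup>2 = ((\<omega> - 1)\<^sup>2 * N + Q) / ((\<omega> + 1)\<^sup>2 * N + Q)"
    by (simp add: eq_divide_eq norm_minus_commute)
  also have "\<dots> \<le> ((\<omega> - 1)\<^sup>2 + lmax\<^sup>2) / ((\<omega> + 1)\<^sup>2 + lmax\<^sup>2)"
  proof (rule weighted_ratio_le)
    show "(\<omega> - 1)\<^sup>2 \<le> (\<omega> + 1)\<^sup>2"
      using \<open>0 < \<omega>\<close> by (simp add: power2_eq_square algebra_simps)
  qed (use \<open>0 < N\<close> \<open>0 \<le> Q\<close> S_bound \<open>0 < \<omega>\<close> in \<open>auto simp: N_def Q_def p_def mult_ac\<close>)
  finally show ?thesis .
qed

lemma hss_eigenvalue_bound:
  fixes K S :: "real mat" and lmax \<omega> :: real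
  assumes K: "K \<in> carrier_mat n n" and skew_K: "transpose_mat K = - K"
    and S: "S \<in> carrier_mat n n" and skew_S: "transpose_mat S = - S"
    and "0 < \<omega>"
    and S_bound: "\<And>v. v \<in> carrier_vec n \<Longrightarrow> sqnorm (cmat S *\<^sub>v v) \<le> lmax\<^sup>2 * sqnorm v"
    and ev: "eigenvalue (cmat (the (mat_inverse (hss_preconditioner \<omega> K S)) * (1\<^sub>m n + K + S))) z"
  shows "(cmod (z - 1))\<^sup>2 \<le> ((\<omega> - 1)\<^sup>2 + lmax\<^sup>2) / ((\<omega> + 1)\<^sup>2 + lmax\<^sup>2)"
proof -
  let ?F = "hss_preconditioner \<omega> K S" and ?R = "1\<^sub>m n + K + S"
  have F: "?F \<in> carrier_mat n n" and R: "?R \<in> carrier_mat n n"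
    using K S by (auto intro: hss_preconditioner_carrier)
  obtain F' where F': "mat_inverse ?F = Some F'" "?F * F' = 1\<^sub>m n" "F' \<in> carrier_mat n n"
    using mat_inverse_of_cmat_injective[OF F]
      hss_preconditioner_injective[OF K skew_K S skew_S \<open>0 < \<omega>\<close>] by blast
  have "cmat ?F * cmat F' = 1\<^sub>m n"
    using F F' by (simp add: of_real_hom.mat_hom_mult[of _ n n _ n, symmetric] of_real_hom.mat_hom_one)
  moreover have "eigenvalue (cmat F' * cmat ?R) z"
    using ev F' R by (simp add: of_real_hom.mat_hom_mult[of _ n n _ n, symmetric])
  ultimately obtain v where "v \<in> carrier_vec n" "v \<noteq> 0\<^sub>v n" "cmat ?R *\<^sub>v v = z \<cdot>\<^sub>v (cmat ?F *\<^sub>v v)"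
    using eigenvalue_mult_right_inverse[of "cmat ?F" n "cmat F'" "cmat ?R"] F F' R by auto
  then show ?thesis
    using hss_generalized_eigenvalue_bound[OF K skew_K S skew_S \<open>0 < \<omega>\<close>] S_bound by blast
qed

definition skew_block :: "real mat \<Rightarrow> real mat" where
  "skew_block D = four_block_mat (0\<^sub>m (dim_row D) (dim_row D)) (- D) D (0\<^sub>m (dim_row D) (dim_row D))"

lemma skew_block_carrier: "D \<in> carrier_mat m m \<Longrightarrow> skew_block D \<in> carrier_mat (m + m) (m + m)"
  unfolding skew_block_def by simp

lemma transpose_skew_block:
  assumes "D \<in> carrier_mat m m" "transpose_mat D = D"
  shows "transpose_mat (skew_block D) = - skew_block D"
proof -
  have "D $$ (j, i) = D $$ (i, j)" if "i < m" "j < m" for i j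
    using index_transpose_eq[OF assms(2,1) that] by simp
  then show ?thesis
    using assms(1) unfolding skew_block_def by (intro eq_matI) auto
qed

lemma sqnorm_skew_block_le:
  fixes D :: "real mat"
  assumes D: "D \<in> carrier_mat m m" and "diagonal_mat D" and "\<And>i. i < m \<Longrightarrow> \<bar>D $$ (i, i)\<bar> \<le> l"
    and v: "v \<in> carrier_vec (m + m)"
  shows "sqnorm (cmat (skew_block D) *\<^sub>v v) \<le> l\<^sup>2 * sqnorm v"
proof -
  let ?a = "vec_first v m" and ?d = "vec_last v m"
  have "cmat (skew_block D) = four_block_mat (0\<^sub>m m m) (- cmat D) (cmat D) (0\<^sub>m m m)"
    using D unfolding skew_block_def by (intro eq_matI) auto
  then have "cmat (skew_block D) *\<^sub>v v = four_block_mat (0\<^sub>m m m) (- cmat D) (cmat D) (0\<^sub>m m m) *\<^sub>v (?a @\<^sub>v ?d)"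
    using vec_first_last_append[OF v] by simp
  also have "\<dots> = (- (cmat D *\<^sub>v ?d)) @\<^sub>v (cmat D *\<^sub>v ?a)"
    using D by (subst four_block_mat_mult_vec[OF zero_carrier_mat _ _ zero_carrier_mat]) auto
  finally have "sqnorm (cmat (skew_block D) *\<^sub>v v) = sqnorm (cmat D *\<^sub>v ?d) + sqnorm (cmat D *\<^sub>v ?a)"
    by (simp add: sqnorm_append sqnorm_uminus)
  also have "\<dots> \<le> l\<^sup>2 * sqnorm ?d + l\<^sup>2 * sqnorm ?a"
    using sqnorm_diagonal_le[OF assms(1-3)] by (intro add_mono) auto
  also have "\<dots> = l\<^sup>2 * sqnorm v"
    using vec_first_last_append[OF v] sqnorm_append[of ?a ?d] by (simp add: algebra_simps)
  finally show ?thesis .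
qed

lemma calT_carrier: "T \<in> carrier_mat m m \<Longrightarrow> calT T \<in> carrier_mat (m + m) (m + m)"
  unfolding calT_def by simp

lemma transpose_calT:
  assumes "T \<in> carrier_mat m m" "transpose_mat T = T"
  shows "transpose_mat (calT T) = - calT T"
proof -
  have "T $$ (j, i) = T $$ (i, j)" if "i < m" "j < m" for i j
    using index_transpose_eq[OF assms(2,1) that] by simp
  then show ?thesis
    using assms(1) unfolding calT_def by (intro eq_matI) auto
qed

lemma calR_eq:
  "T \<in> carrier_mat m m \<Longrightarrow> D \<in> carrier_mat m m \<Longrightarrow> calR T D = 1\<^sub>m (m + m) + calT T + skew_block D"
  unfolding calR_def calT_def skew_block_def by (intro eq_matI) auto

lemma calF_eq:
  assumes "T \<in> carrier_mat m m" "D \<in> carrier_mat m m"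
  shows "calF \<omega> T D = hss_preconditioner \<omega> (calT T) (skew_block D)"
proof -
  have "\<omega> \<cdot>\<^sub>m 1\<^sub>m (m + m) + calD D = (\<omega> + 1) \<cdot>\<^sub>m 1\<^sub>m (m + m) + skew_block D"
    using assms unfolding calD_def skew_block_def by (intro eq_matI) auto
  moreover have "dim_row T = m" "dim_row (calT T) = m + m"
    using assms calT_carrier[OF assms(1)] by auto
  ultimately show ?thesis
    unfolding calF_def hss_preconditioner_def by (simp only: mult_2)
qed

lemma calF_calR_eigenvalue_bound:
  fixes T D :: "real mat" and l \<omega> :: real
  assumes T: "T \<in> carrier_mat m m" "transpose_mat T = T"
    and D: "D \<in> carrier_mat m m" "diagonal_mat D" and l: "\<And>i. i < m \<Longrightarrow> \<bar>D $$ (i, i)\<bar> \<le> l"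
    and "0 < \<omega>"
    and ev: "eigenvalue (cmat (the (mat_inverse (calF \<omega> T D)) * calR T D)) z"
  shows "cmod (z - 1) \<le> sqrt (((\<omega> - 1)\<^sup>2 + l\<^sup>2) / ((\<omega> + 1)\<^sup>2 + l\<^sup>2))"
proof -
  have "(cmod (z - 1))\<^sup>2 \<le> ((\<omega> - 1)\<^sup>2 + l\<^sup>2) / ((\<omega> + 1)\<^sup>2 + l\<^sup>2)"
  proof (rule hss_eigenvalue_bound)
    show "eigenvalue (cmat (the (mat_inverse (hss_preconditioner \<omega> (calT T) (skew_block D)))
        * (1\<^sub>m (m + m) + calT T + skew_block D))) z"
      using ev unfolding calF_eq[OF T(1) D(1)] calR_eq[OF T(1) D(1)] .
  qed (use T D l \<open>0 < \<omega>\<close> in \<open>auto intro: calT_carrier transpose_calT skew_block_carrier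
      transpose_skew_block transpose_diagonal_mat sqnorm_skew_block_le\<close>)
  then show ?thesis
    using real_sqrt_le_mono by fastforce
qed

text \<open>Only the symmetry of \<open>T\<^sub>2\<close> enters.\<close>

theorem theorem2:
  fixes \<alpha> a b dt \<omega> :: real and M :: nat and D2 :: "real mat"
  assumes "1 < \<alpha>" and "\<alpha> \<le> 2" and "0 < M" and "a < b" and "0 < dt"
    and "D2 \<in> carrier_mat (M^2) (M^2)" and "diagonal_mat D2"
    and "\<forall>i < M^2. 0 \<le> D2 $$ (i,i)"
    and "0 < \<omega>"
  shows "let T = T2 \<alpha> M a b dt;
             lmax = Max {D2 $$ (i,i) | i. i < M^2};
             \<sigma> = sqrt (((\<omega> - 1)^2 + lmax^2) / ((\<omega> + 1)^2 + lmax^2))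
         in (\<forall>z. eigenvalue (map_mat complex_of_real
                    (the (mat_inverse (calF \<omega> T D2)) * calR T D2)) z
                \<longrightarrow> cmod (z - 1) \<le> \<sigma>)
            \<and> \<sigma> < 1"
proof -
  define lmax where "lmax = Max {D2 $$ (i,i) | i. i < M^2}"
  have lmax: "\<bar>D2 $$ (i, i)\<bar> \<le> lmax" if "i < M^2" for i
    using that assms(8) unfolding lmax_def by (auto intro!: Max_ge)
  have "((\<omega> - 1)\<^sup>2 + lmax\<^sup>2) / ((\<omega> + 1)\<^sup>2 + lmax\<^sup>2) < 1"
    using \<open>0 < \<omega>\<close> by (simp add: add_pos_nonneg power2_eq_square algebra_simps)
  then show ?thesis
    using calF_calR_eigenvalue_bound[OF T2_carrier transpose_T2 assms(6,7) lmax \<open>0 < \<omega>\<close>]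
    unfolding Let_def lmax_def[symmetric] by simp
qed

end
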